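(* Let $S$ and $T$ be primitive strings, each of length at least $2$, over a totally ordered alphabet. Let $U$ be the LMS-prefix of $S$ (i.e. of $\mathrm{conj}_1(S)$) and $V$ the LMS-prefix of $T$. If $U<_{LMS}V$, then $S\prec_\omega T$.
   Context: For $T=T[1..n]$, $\mathrm{conj}_i(T)=T[i..n]T[1..i-1]$; strings are viewed cyclically. For a primitive string $T$ of length $\ge2$, position $i$ is of type S if $\mathrm{conj}_i(T)<_{\mathrm{lex}}\mathrm{conj}_{i+1}(T)$ and of type L if $\mathrm{conj}_i(T)>_{\mathrm{lex}}\mathrm{conj}_{i+1}(T)$; an S-type position $i$ is LMS if $i-1$ (cyclically) is L-type. The LMS-prefix of $\mathrm{conj}_i(T)$ is the cyclic substring from position $i$ to the first LMS position strictly after $i$ (cyclically, wrapping around if needed). LMS-order: $U<_{LMS}V$ if $V$ is a proper prefix of $U$, or neither is a prefix of the other and $U<_{\mathrm{lex}}V$. The $\omega$-order: $S\prec_\omega T$ if either $\mathrm{root}(S)=\mathrm{root}(T)$ and $\exp(S)<\exp(T)$, or $S^\omega<_{\mathrm{lex}}T^\omega$, where $X^\omega$ is the infinite concatenation of copies of $X$ and $X=\mathrm{root}(X)^{\exp(X)}$ with $\mathrm{root}(X)$ primitive. *)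

theory Defs
  imports Main "HOL-Library.Sublist"
begin

(* Strings are lists over a linear order; positions are 0-indexed internally:
   paper position i (1-indexed) corresponds to index i-1 here, and
   conj_i(T) = T[i..n]T[1..i-1] is  rotate (i-1) T. *)

definition conj :: "nat \<Rightarrow> 'a list \<Rightarrow> 'a list" where
  "conj i w = rotate i w"

definition primitive :: "'a list \<Rightarrow> bool" where
  "primitive w \<longleftrightarrow> w \<noteq> [] \<and> (\<forall>r k. w = concat (replicate k r) \<longrightarrow> k = 1)"

abbreviation lex_less :: "'a::linorder list \<Rightarrow> 'a list \<Rightarrow> bool" where
  "lex_less u v \<equiv> ord_class.lexordp u v"

definition S_type :: "'a::linorder list \<Rightarrow> nat \<Rightarrow> bool" where
  "S_type w i \<longleftrightarrow> lex_less (conj i w) (conj (Suc i) w)"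

definition L_type :: "'a::linorder list \<Rightarrow> nat \<Rightarrow> bool" where
  "L_type w i \<longleftrightarrow> lex_less (conj (Suc i) w) (conj i w)"

(* i < length w; predecessor taken cyclically *)
definition is_LMS :: "'a::linorder list \<Rightarrow> nat \<Rightarrow> bool" where
  "is_LMS w i \<longleftrightarrow> S_type w i \<and> L_type w ((i + length w - 1) mod length w)"

(* cyclic substring from index i to the first LMS index strictly after i
   (cyclically, possibly wrapping all the way round back to i) *)
definition lms_prefix :: "'a::linorder list \<Rightarrow> nat \<Rightarrow> 'a list" where
  "lms_prefix w i =
     (let j = (LEAST j. i < j \<and> j \<le> i + length w \<and> is_LMS w (j mod length w))
      in take (j - i + 1) (conj i w @ conj i w))"

definition lms_less :: "'a::linorder list \<Rightarrow> 'a list \<Rightarrow> bool" where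
  "lms_less u v \<longleftrightarrow> strict_prefix v u \<or> (\<not> prefix u v \<and> \<not> prefix v u \<and> lex_less u v)"

definition root :: "'a list \<Rightarrow> 'a list" where
  "root x = (THE r. primitive r \<and> (\<exists>k. x = concat (replicate k r)))"

definition expo :: "'a list \<Rightarrow> nat" where
  "expo x = length x div length (root x)"

definition omega :: "'a list \<Rightarrow> nat \<Rightarrow> 'a" where
  "omega x n = x ! (n mod length x)"

definition inf_lex_less :: "(nat \<Rightarrow> 'a::linorder) \<Rightarrow> (nat \<Rightarrow> 'a) \<Rightarrow> bool" where
  "inf_lex_less x y \<longleftrightarrow> (\<exists>k. (\<forall>i<k. x i = y i) \<and> x k < y k)"

definition omega_less :: "'a::linorder list \<Rightarrow> 'a list \<Rightarrow> bool" where
  "omega_less s t \<longleftrightarrow> (root s = root t \<and> expo s < expo t) \<or> inf_lex_less (omega s) (omega t)"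

end

theory Submission
  imports Defs
begin

text \<open>
  Both LMS-prefixes are prefixes of the infinite words \<open>S\<^sup>\<omega>\<close> and \<open>T\<^sup>\<omega>\<close>, and we show
  \<open>S\<^sup>\<omega> <\<^sub>l\<^sub>e\<^sub>x T\<^sup>\<omega>\<close> outright.
  If \<open>U\<close> and \<open>V\<close> differ at a position inside both, that position decides.
  Otherwise \<open>V\<close> is a proper prefix of \<open>U\<close>: the words agree up to the position \<open>j\<close> where
  \<open>V\<close> ends, and \<open>j\<close> is LMS in \<open>T\<close> but not in \<open>S\<close>. An L-type position followed by an
  S-type one is a strict descent \<open>T[j-1] > T[j]\<close>; it carries over to \<open>S\<close>, so \<open>j-1\<close> is
  L-type in \<open>S\<close> and \<open>j\<close> is not S-type in \<open>S\<close>. Finally, among infinite words with the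
  same first letter, one that is not S-type is smaller than one that is S-type.
  Types are computed on the infinite periodic words: comparing two rotations is the same as
  comparing the corresponding suffixes of \<open>w\<^sup>\<omega>\<close>.
\<close>

definition shift :: "(nat \<Rightarrow> 'a) \<Rightarrow> nat \<Rightarrow> nat \<Rightarrow> 'a" where
  "shift x i = (\<lambda>t. x (i + t))"

lemma shift_apply [simp]: "shift x i t = x (i + t)"
  by (simp add: shift_def)

lemma shift_shift [simp]: "shift (shift x i) j = shift x (i + j)"
  by (simp add: shift_def add.assoc)

lemma inf_lex_less_asym:
  assumes "inf_lex_less x y"
  shows "\<not> inf_lex_less y x"
proof
  assume "inf_lex_less y x"
  then obtain l where "\<forall>i<l. y i = x i" "y l < x l"
    unfolding inf_lex_less_def by blast
  moreover obtain k where "\<forall>i<k. x i = y i" "x k < y k"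
    using assms unfolding inf_lex_less_def by blast
  ultimately show False
    by (cases k l rule: linorder_cases) auto
qed

lemma inf_lex_less_head: "x 0 < y 0 \<Longrightarrow> inf_lex_less x y"
  unfolding inf_lex_less_def by (intro exI[of _ 0]) simp

lemma inf_lex_less_shift_iff:
  assumes common: "\<forall>t<p. x t = y t"
  shows "inf_lex_less x y \<longleftrightarrow> inf_lex_less (shift x p) (shift y p)"
proof
  assume "inf_lex_less x y"
  then obtain k where k: "\<forall>i<k. x i = y i" "x k < y k"
    unfolding inf_lex_less_def by blast
  with common have "p \<le> k"
    by (metis less_irrefl not_le)
  with k show "inf_lex_less (shift x p) (shift y p)"
    unfolding inf_lex_less_def by (intro exI[of _ "k - p"]) auto
next
  assume "inf_lex_less (shift x p) (shift y p)"
  then obtain k where k: "\<forall>i<k. x (p + i) = y (p + i)" "x (p + k) < y (p + k)"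
    unfolding inf_lex_less_def by auto
  have "x i = y i" if "i < p + k" for i
    using common k(1) that by (cases "i < p") (auto dest: spec[of _ "i - p"])
  with k(2) show "inf_lex_less x y"
    unfolding inf_lex_less_def by blast
qed

lemma inf_lex_less_shift_1_iff:
  "x 0 = y 0 \<Longrightarrow> inf_lex_less x y \<longleftrightarrow> inf_lex_less (shift x 1) (shift y 1)"
  by (rule inf_lex_less_shift_iff) simp

lemma head_less_if_L_S:
  assumes L: "inf_lex_less (shift x 1) x" and S: "inf_lex_less (shift x 1) (shift x 2)"
  shows "x 1 < x 0"
proof (cases "x 0" "x 1" rule: linorder_cases)
  case less
  then have "inf_lex_less x (shift x 1)"
    by (intro inf_lex_less_head) simp
  with L show ?thesis
    using inf_lex_less_asym by blast
next
  case equal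
  with L have "inf_lex_less (shift x 2) (shift x 1)"
    using inf_lex_less_shift_1_iff[of "shift x 1" x] by (simp add: numeral_2_eq_2)
  with S show ?thesis
    using inf_lex_less_asym by blast
qed

lemma head_le_if_not_S:
  assumes "\<not> inf_lex_less x (shift x 1)"
  shows "x 1 \<le> x 0"
proof (rule ccontr)
  assume "\<not> x 1 \<le> x 0"
  then have "inf_lex_less x (shift x 1)"
    by (intro inf_lex_less_head) simp
  with assms show False ..
qed

lemma inf_lex_less_not_S_S_same_head:
  assumes "x 0 = y 0" and "\<not> inf_lex_less x (shift x 1)" and "inf_lex_less y (shift y 1)"
  shows "inf_lex_less x y"
proof -
  obtain k where "\<forall>t<k. y t = y (1 + t)" "y k < y (1 + k)"
    using assms(3) unfolding inf_lex_less_def by auto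
  with assms(1,2) show ?thesis
  proof (induction k arbitrary: x y)
    case 0
    have "x 1 \<le> x 0"
      using "0.prems"(2) by (rule head_le_if_not_S)
    with "0.prems"(1,4) have "x 1 < y 1"
      by simp
    with "0.prems"(1) show ?case
      unfolding inf_lex_less_def by (intro exI[of _ 1]) (simp add: less_Suc_eq)
  next
    case (Suc k)
    have y01: "y 0 = y 1"
      using Suc.prems(3) by auto
    show ?case
    proof (cases "x 1 < x 0")
      case True
      with Suc.prems(1) y01 show ?thesis
        unfolding inf_lex_less_def by (intro exI[of _ 1]) (simp add: less_Suc_eq)
    next
      case False
      then have x01: "x 0 = x 1"
        using head_le_if_not_S[OF Suc.prems(2)] by simp
      then have "x 0 = shift x 1 0"
        by simp
      then have "\<not> inf_lex_less (shift x 1) (shift (shift x 1) 1)"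
        using Suc.prems(2) inf_lex_less_shift_1_iff by blast
      moreover have "shift x 1 0 = shift y 1 0"
        using Suc.prems(1) x01 y01 by simp
      moreover have "\<forall>t<k. shift y 1 t = shift y 1 (1 + t)" "shift y 1 k < shift y 1 (1 + k)"
        using Suc.prems(3,4) by auto
      ultimately have "inf_lex_less (shift x 1) (shift y 1)"
        using Suc.IH by blast
      then show ?thesis
        using inf_lex_less_shift_1_iff Suc.prems(1) by blast
    qed
  qed
qed

lemma lex_less_same_length_iff:
  assumes "length u = length v"
  shows "lex_less u v \<longleftrightarrow> (\<exists>k<length u. (\<forall>t<k. u ! t = v ! t) \<and> u ! k < v ! k)"
proof -
  have "take k u = take k v \<longleftrightarrow> (\<forall>t<k. u ! t = v ! t)" if "k < length u" for k
    using that assms by (auto simp: list_eq_iff_nth_eq)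
  then show ?thesis
    using assms unfolding lexordp_conv_lexord lexord_take_index_conv by auto
qed

lemma length_conj [simp]: "length (conj i w) = length w"
  by (simp add: conj_def)

lemma nth_conj: "k < length w \<Longrightarrow> conj i w ! k = omega w (i + k)"
  by (simp add: conj_def nth_rotate omega_def)

lemma omega_add_mod: "omega w (i + k mod length w) = omega w (i + k)"
  by (simp add: omega_def mod_add_right_eq)

text \<open>Both suffixes have period \<open>length w\<close>, so a first difference lies within one period.\<close>

lemma lex_less_conj_iff:
  assumes "w \<noteq> []"
  shows "lex_less (conj i w) (conj j w) \<longleftrightarrow> inf_lex_less (shift (omega w) i) (shift (omega w) j)"
proof
  assume "lex_less (conj i w) (conj j w)"
  then obtain k where "k < length w" "\<forall>t<k. conj i w ! t = conj j w ! t" "conj i w ! k < conj j w ! k"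
    by (auto simp: lex_less_same_length_iff)
  then show "inf_lex_less (shift (omega w) i) (shift (omega w) j)"
    unfolding inf_lex_less_def by (intro exI[of _ k]) (simp add: nth_conj)
next
  assume "inf_lex_less (shift (omega w) i) (shift (omega w) j)"
  then obtain k where k: "\<forall>t<k. omega w (i + t) = omega w (j + t)" "omega w (i + k) < omega w (j + k)"
    unfolding inf_lex_less_def by auto
  have "k < length w"
  proof (rule ccontr)
    assume "\<not> k < length w"
    then have "k mod length w < k"
      using assms by (meson length_greater_0_conv mod_less_divisor not_less order_less_le_trans)
    then have "omega w (i + k mod length w) = omega w (j + k mod length w)"
      using k(1) by blast
    with k(2) show False
      by (simp add: omega_add_mod)
  qed
  with k show "lex_less (conj i w) (conj j w)"
    by (auto simp: lex_less_same_length_iff nth_conj)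
qed

lemma S_type_iff_inf_lex_less:
  "w \<noteq> [] \<Longrightarrow> S_type w i \<longleftrightarrow> inf_lex_less (shift (omega w) i) (shift (omega w) (Suc i))"
  by (simp add: S_type_def lex_less_conj_iff)

lemma L_type_iff_inf_lex_less:
  "w \<noteq> [] \<Longrightarrow> L_type w i \<longleftrightarrow> inf_lex_less (shift (omega w) (Suc i)) (shift (omega w) i)"
  by (simp add: L_type_def lex_less_conj_iff)

lemma conj_mod_eq: "i mod length w = j mod length w \<Longrightarrow> conj i w = conj j w"
  unfolding conj_def by (metis rotate_conv_mod)

lemma conj_Suc_mod_eq: "i mod length w = j mod length w \<Longrightarrow> conj (Suc i) w = conj (Suc j) w"
  by (rule conj_mod_eq) (metis mod_Suc_eq)

lemma S_type_mod_eq: "i mod length w = j mod length w \<Longrightarrow> S_type w i = S_type w j"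
  unfolding S_type_def using conj_mod_eq conj_Suc_mod_eq by metis

lemma L_type_mod_eq: "i mod length w = j mod length w \<Longrightarrow> L_type w i = L_type w j"
  unfolding L_type_def using conj_mod_eq conj_Suc_mod_eq by metis

lemma cyclic_pred_mod:
  fixes j n :: nat
  assumes "0 < n" and "0 < j"
  shows "(j mod n + n - 1) mod n = (j - 1) mod n"
proof -
  obtain i where j: "j = Suc i"
    using assms(2) gr0_conv_Suc by blast
  have "(j mod n + n - 1) mod n = (j mod n + (n - 1)) mod n"
    using assms(1) by (simp add: Nat.add_diff_assoc Suc_leI)
  also have "\<dots> = (i + n) mod n"
    using assms(1) unfolding j by (metis add_Suc_right Suc_pred' mod_add_left_eq add_Suc)
  finally show ?thesis
    unfolding j by simp
qed

lemma is_LMS_mod_iff: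
  assumes "w \<noteq> []" and "0 < j"
  shows "is_LMS w (j mod length w) \<longleftrightarrow> S_type w j \<and> L_type w (j - 1)"
proof -
  let ?n = "length w"
  have "(j mod ?n + ?n - 1) mod ?n = (j - 1) mod ?n"
    using assms by (intro cyclic_pred_mod) simp_all
  then have "L_type w ((j mod ?n + ?n - 1) mod ?n) = L_type w (j - 1)"
    by (intro L_type_mod_eq) simp
  moreover have "S_type w (j mod ?n) = S_type w j"
    by (rule S_type_mod_eq) simp
  ultimately show ?thesis
    unfolding is_LMS_def by simp
qed

lemma primitive_two_le_card_set:
  assumes "primitive w" and "2 \<le> length w"
  shows "2 \<le> card (set w)"
proof (rule ccontr)
  assume "\<not> 2 \<le> card (set w)"
  moreover have "set w \<noteq> {}"
    using assms(2) by auto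
  ultimately obtain a where "set w = {a}"
    by (metis One_nat_def card_0_eq card_1_singletonE finite_set less_2_cases not_le)
  then have "w = concat (replicate (length w) [a])"
    by (metis concat_map_singleton map_replicate replicate_length_same singletonD id_apply)
  with assms(1) have "length w = 1"
    unfolding primitive_def by blast
  with assms(2) show False
    by simp
qed

lemma conj_Suc_neq:
  assumes "primitive w" and "2 \<le> length w"
  shows "conj (Suc i) w \<noteq> conj i w"
proof
  assume "conj (Suc i) w = conj i w"
  then have "rotate1 (rotate i w) = rotate i w"
    by (simp add: conj_def)
  then have "card (set w) \<le> 1"
    using rotate1_fixpoint_card by force
  with primitive_two_le_card_set[OF assms] show False
    by simp
qed

text \<open>The lexicographically least rotation starts at an LMS position.\<close>

lemma exists_LMS:
  assumes "primitive w" and "2 \<le> length w"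
  shows "\<exists>j. 0 < j \<and> j \<le> length w \<and> is_LMS w (j mod length w)"
proof -
  let ?n = "length w"
  have n: "0 < ?n"
    using assms(2) by linarith
  have "\<exists>r\<in>(\<lambda>k. conj k w) ` {..<?n}. \<forall>x\<in>(\<lambda>k. conj k w) ` {..<?n}. x \<noteq> r \<longrightarrow> \<not> lex_less x r"
    by (rule Finite_Set.bex_min_element)
      (use n in \<open>auto intro: transp_onI dest: lexordp_antisym lexordp_trans\<close>)
  then obtain m where min_rotation: "\<forall>k<?n. conj k w \<noteq> conj m w \<longrightarrow> \<not> lex_less (conj k w) (conj m w)"
    by auto
  have below_min: "\<not> lex_less (conj k w) (conj m w)" for k
    using min_rotation[rule_format, of "k mod ?n"] n lexordp_irreflexive'
    by (metis conj_mod_eq mod_less_divisor mod_mod_trivial)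
  have S: "S_type w m"
    using below_min[of "Suc m"] conj_Suc_neq[OF assms] lexordp_linear unfolding S_type_def by metis
  have "conj (Suc (m + ?n - 1)) w = conj m w"
    using n by (intro conj_mod_eq) simp
  then have L: "L_type w (m + ?n - 1)"
    using below_min[of "m + ?n - 1"] conj_Suc_neq[OF assms] lexordp_linear unfolding L_type_def by metis
  define j where "j = Suc ((m + ?n - 1) mod ?n)"
  have "j mod ?n = m mod ?n"
    unfolding j_def using n by (metis Suc_pred' add_gr_0 mod_Suc_eq mod_add_self2)
  then have "S_type w j \<and> L_type w (j - 1)"
    using S L S_type_mod_eq L_type_mod_eq unfolding j_def by (metis diff_Suc_1 mod_mod_trivial)
  moreover have "0 < j" "j \<le> ?n"
    unfolding j_def using n by (simp_all add: Suc_leI)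
  ultimately show ?thesis
    using is_LMS_mod_iff n by blast
qed

definition first_LMS :: "'a::linorder list \<Rightarrow> nat" where
  "first_LMS w = (LEAST j. 0 < j \<and> j \<le> length w \<and> is_LMS w (j mod length w))"

lemma first_LMS:
  assumes "primitive w" and "2 \<le> length w"
  shows "0 < first_LMS w" and "first_LMS w \<le> length w"
    and "S_type w (first_LMS w)" and "L_type w (first_LMS w - 1)"
proof -
  have "w \<noteq> []"
    using assms(2) by auto
  then show "0 < first_LMS w" "first_LMS w \<le> length w"
    "S_type w (first_LMS w)" "L_type w (first_LMS w - 1)"
    using LeastI_ex[OF exists_LMS[OF assms]] is_LMS_mod_iff[of w "first_LMS w"]
    unfolding first_LMS_def by auto
qed

lemma not_LMS_before_first_LMS:
  assumes "primitive w" and "2 \<le> length w" and "0 < j" and "j < first_LMS w"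
  shows "\<not> (S_type w j \<and> L_type w (j - 1))"
proof -
  have "w \<noteq> []"
    using assms(2) by auto
  moreover have "j \<le> length w"
    using first_LMS(2)[OF assms(1,2)] assms(4) by simp
  ultimately show ?thesis
    using not_less_Least[of j] assms(3,4) is_LMS_mod_iff[of w j]
    unfolding first_LMS_def by blast
qed

lemma lms_prefix_0_eq:
  assumes "primitive w" and "2 \<le> length w"
  shows "lms_prefix w 0 = map (omega w) [0..<Suc (first_LMS w)]"
proof -
  have omega_eq: "omega w k = (w @ w) ! k" if "k < 2 * length w" for k
    using that by (auto simp: omega_def nth_append le_mod_geq not_less)
  have bound: "Suc (first_LMS w) \<le> 2 * length w"
    using first_LMS(2)[OF assms] assms(2) by simp
  have "lms_prefix w 0 = take (Suc (first_LMS w)) (w @ w)"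
    by (simp add: lms_prefix_def first_LMS_def conj_def Let_def del: take_append)
  also have "\<dots> = map (omega w) [0..<Suc (first_LMS w)]"
    using bound by (intro nth_equalityI) (simp_all del: take_append upt_Suc add: omega_eq)
  finally show ?thesis .
qed

lemma inf_lex_less_at_first_LMS:
  assumes S: "primitive S" "2 \<le> length S" and T: "primitive T" "2 \<le> length T"
    and earlier: "first_LMS T < first_LMS S"
    and common: "\<forall>t\<le>first_LMS T. omega S t = omega T t"
  shows "inf_lex_less (omega S) (omega T)"
proof -
  define x y j where "x = omega S" and "y = omega T" and "j = first_LMS T"
  have "S \<noteq> []" "T \<noteq> []"
    using S(2) T(2) by auto
  obtain i where i: "j = Suc i"
    using first_LMS(1)[OF T] unfolding j_def using gr0_conv_Suc by blast
  have "inf_lex_less (shift y j) (shift y i)" and y_S: "inf_lex_less (shift y j) (shift y (Suc j))"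
    using first_LMS(3,4)[OF T] \<open>T \<noteq> []\<close> i
    by (simp_all add: y_def j_def S_type_iff_inf_lex_less L_type_iff_inf_lex_less)
  then have "y j < y i"
    using head_less_if_L_S[of "shift y i"] i by (simp add: numeral_2_eq_2)
  then have "x j < x i"
    using common i unfolding x_def y_def j_def by simp
  then have "L_type S i"
    using \<open>S \<noteq> []\<close> i inf_lex_less_head[of "shift x j" "shift x i"]
    by (simp add: x_def L_type_iff_inf_lex_less)
  then have "\<not> S_type S j"
    using not_LMS_before_first_LMS[OF S _ earlier] i unfolding j_def by simp
  then have x_not_S: "\<not> inf_lex_less (shift x j) (shift x (Suc j))"
    using \<open>S \<noteq> []\<close> by (simp add: x_def S_type_iff_inf_lex_less)
  have "inf_lex_less (shift x j) (shift y j)"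
    by (rule inf_lex_less_not_S_S_same_head) (use common x_not_S y_S in \<open>simp_all add: x_def y_def j_def\<close>)
  then show ?thesis
    using inf_lex_less_shift_iff[of j x y] common unfolding x_def y_def j_def by simp
qed

lemma strict_prefix_map_upt:
  assumes "strict_prefix (map y [0..<n]) (map x [0..<m])"
  shows "n < m" and "\<forall>t<n. x t = y t"
proof -
  show "n < m"
    using prefix_length_less[OF assms] by simp
  obtain zs where "map x [0..<m] = map y [0..<n] @ zs"
    using assms by (auto simp: strict_prefix_def prefix_def)
  then have "map x [0..<m] ! t = y t" if "t < n" for t
    using that by (simp add: nth_append)
  with \<open>n < m\<close> show "\<forall>t<n. x t = y t"
    by simp
qed

lemma inf_lex_less_if_lex_less_map_upt:
  assumes "lex_less (map x [0..<m]) (map y [0..<n])"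
    and "\<not> prefix (map x [0..<m]) (map y [0..<n])"
  shows "inf_lex_less x y"
proof -
  have "\<not> (m < n \<and> take m (map y [0..<n]) = map x [0..<m])"
    using assms(2) by (metis take_is_prefix)
  then obtain i where "i < min m n" "take i (map x [0..<m]) = take i (map y [0..<n])"
    "map x [0..<m] ! i < map y [0..<n] ! i"
    using assms(1) unfolding lexordp_conv_lexord lexord_take_index_conv by fastforce
  then show ?thesis
    unfolding inf_lex_less_def by (intro exI[of _ i]) (simp add: take_map)
qed

theorem lemma5:
  fixes S T :: "'a::linorder list"
  assumes "primitive S" and "primitive T"
    and "length S \<ge> 2" and "length T \<ge> 2"
    and "lms_less (lms_prefix S 0) (lms_prefix T 0)"
  shows "omega_less S T"
proof -
  define U V where "U = map (omega S) [0..<Suc (first_LMS S)]"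
    and "V = map (omega T) [0..<Suc (first_LMS T)]"
  have "lms_less U V"
    using assms lms_prefix_0_eq unfolding U_def V_def by metis
  then consider (extension) "strict_prefix V U" | (mismatch) "lex_less U V" "\<not> prefix U V"
    unfolding lms_less_def by blast
  then have "inf_lex_less (omega S) (omega T)"
  proof cases
    case extension
    then have "first_LMS T < first_LMS S" "\<forall>t\<le>first_LMS T. omega S t = omega T t"
      using strict_prefix_map_upt unfolding U_def V_def by (fastforce simp: less_Suc_eq_le)+
    with assms(1-4) show ?thesis
      by (intro inf_lex_less_at_first_LMS)
  next
    case mismatch
    then show ?thesis
      unfolding U_def V_def by (rule inf_lex_less_if_lex_less_map_upt)
  qed
  then show ?thesis
    unfolding omega_less_def ..
qed

end
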